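(* Run WSU-UX with $K=2$ and any valid $(\eta,\gamma)$ on the two-phase loss sequence, and assume $\Pr(\mathcal E_2)>0$. Let $t_0=T_1+T_2+1$, let $1\le\tau\le T_3+T_4$ and $t=t_0+\tau$. Then $$\mathbb{E}[\pi_{t,2}\mid\mathcal E_2]\le\frac34\exp\Bigl(-\frac{\eta}{4}\tau\Bigr).$$
   Context: WSU-UX. Fix integers $K\ge 2$ and $T\ge 1$ and hyperparameters $\eta,\gamma$. The pair $(\eta,\gamma)$ is called valid if $\eta,\gamma\in(0,1/2)$ and $\eta K/\gamma\le 1/2$. Given a fixed loss sequence $\ell_t\in[0,1]^K$, WSU-UX sets $\pi_{1,i}=1/K$ and in each round $t$: forms $\tilde\pi_{t,i}=(1-\gamma)\pi_{t,i}+\gamma/K$; draws $I_t$ with $\Pr(I_t=i\mid\mathcal F_{t-1})=\tilde\pi_{t,i}$; sets $\hat\ell_{t,i}=\ell_{t,i}\mathbf 1[I_t=i]/\tilde\pi_{t,i}$; and updates $\pi_{t+1,i}=\pi_{t,i}\bigl(1-\eta(\hat\ell_{t,i}-\sum_{j}\pi_{t,j}\hat\ell_{t,j})\bigr)$; $\mathcal F_t$ is the history generated by $I_1,\dots,I_t$. Two-phase loss sequence ($K=2$, $T$ a multiple of $100$): with $T_1=\frac{T}{100}$, $\ell_{t,1}=1,\ell_{t,2}=0$ for $1\le t\le T_1$ and $\ell_{t,1}=0,\ell_{t,2}=1$ for $T_1<t\le T$. Further set $T_2=\frac{2}{10}T$, $T_3=\frac1{10}T$, $T_4=\frac{69}{100}T$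 (so $T_1+T_2+T_3+T_4=T$). $\mathcal E_2$ denotes the event $\{\pi_{T_1+T_2+1,1}\ge\frac14\}$. *)

theory Defs
  imports Complex_Main
begin

text \<open>Arms are indexed by 1..K, rounds by t = 1,2,...  A loss sequence is a function
  l :: nat => nat => real with l t i the loss of arm i at round t.
  A history is the list [I_1, ..., I_n] of drawn arms.\<close>

definition wsu_valid :: "nat \<Rightarrow> real \<Rightarrow> real \<Rightarrow> bool" where
  "wsu_valid K \<eta> \<gamma> \<longleftrightarrow> 0 < \<eta> \<and> \<eta> < 1/2 \<and> 0 < \<gamma> \<and> \<gamma> < 1/2 \<and> \<eta> * real K / \<gamma> \<le> 1/2"

definition wsu_tilde :: "nat \<Rightarrow> real \<Rightarrow> (nat \<Rightarrow> real) \<Rightarrow> nat \<Rightarrow> real" where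
  "wsu_tilde K \<gamma> p i = (1 - \<gamma>) * p i + \<gamma> / real K"

definition wsu_est :: "nat \<Rightarrow> real \<Rightarrow> (nat \<Rightarrow> real) \<Rightarrow> (nat \<Rightarrow> real) \<Rightarrow> nat \<Rightarrow> nat \<Rightarrow> real" where
  "wsu_est K \<gamma> lt p I i = (if i = I then lt i / wsu_tilde K \<gamma> p i else 0)"

definition wsu_update :: "nat \<Rightarrow> real \<Rightarrow> real \<Rightarrow> (nat \<Rightarrow> real) \<Rightarrow> (nat \<Rightarrow> real) \<Rightarrow> nat \<Rightarrow> (nat \<Rightarrow> real)" where
  "wsu_update K \<eta> \<gamma> lt p I = (\<lambda>i. p i * (1 - \<eta> * (wsu_est K \<gamma> lt p I i
        - (\<Sum>j\<in>{1..K}. p j * wsu_est K \<gamma> lt p I j))))"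

fun wsu_run :: "nat \<Rightarrow> real \<Rightarrow> real \<Rightarrow> (nat \<Rightarrow> nat \<Rightarrow> real) \<Rightarrow> nat \<Rightarrow> (nat \<Rightarrow> real) \<Rightarrow> nat list \<Rightarrow> (nat \<Rightarrow> real)" where
  "wsu_run K \<eta> \<gamma> l t p [] = p"
| "wsu_run K \<eta> \<gamma> l t p (I # hs) = wsu_run K \<eta> \<gamma> l (Suc t) (wsu_update K \<eta> \<gamma> (l t) p I) hs"

text \<open>wsu_pi K eta gamma l hs = pi_{n+1} when hs = [I_1,...,I_n]\<close>
definition wsu_pi :: "nat \<Rightarrow> real \<Rightarrow> real \<Rightarrow> (nat \<Rightarrow> nat \<Rightarrow> real) \<Rightarrow> nat list \<Rightarrow> nat \<Rightarrow> real" where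
  "wsu_pi K \<eta> \<gamma> l hs = wsu_run K \<eta> \<gamma> l 1 (\<lambda>_. 1 / real K) hs"

text \<open>probability of the history hs: product of Pr(I_t = hs_t | F_{t-1}) = tilde pi_{t, I_t}\<close>
definition wsu_hist_prob :: "nat \<Rightarrow> real \<Rightarrow> real \<Rightarrow> (nat \<Rightarrow> nat \<Rightarrow> real) \<Rightarrow> nat list \<Rightarrow> real" where
  "wsu_hist_prob K \<eta> \<gamma> l hs =
     (\<Prod>t<length hs. wsu_tilde K \<gamma> (wsu_pi K \<eta> \<gamma> l (take t hs)) (hs ! t))"

definition histories :: "nat \<Rightarrow> nat \<Rightarrow> nat list set" where
  "histories K n = {hs. set hs \<subseteq> {1..K} \<and> length hs = n}"

definition wsu_prob :: "nat \<Rightarrow> real \<Rightarrow> real \<Rightarrow> (nat \<Rightarrow> nat \<Rightarrow> real) \<Rightarrow> nat \<Rightarrow> (nat list \<Rightarrow> bool) \<Rightarrow> real" where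
  "wsu_prob K \<eta> \<gamma> l n E = (\<Sum>hs\<in>histories K n. if E hs then wsu_hist_prob K \<eta> \<gamma> l hs else 0)"

definition wsu_cond_exp :: "nat \<Rightarrow> real \<Rightarrow> real \<Rightarrow> (nat \<Rightarrow> nat \<Rightarrow> real) \<Rightarrow> nat \<Rightarrow> (nat list \<Rightarrow> real) \<Rightarrow> (nat list \<Rightarrow> bool) \<Rightarrow> real" where
  "wsu_cond_exp K \<eta> \<gamma> l n X E =
     (\<Sum>hs\<in>histories K n. if E hs then wsu_hist_prob K \<eta> \<gamma> l hs * X hs else 0) / wsu_prob K \<eta> \<gamma> l n E"

definition two_phase_loss :: "nat \<Rightarrow> nat \<Rightarrow> nat \<Rightarrow> real" where
  "two_phase_loss T t i = (if t \<le> T div 100 then (if i = 1 then 1 else 0) else (if i = 2 then 1 else 0))"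

end

theory Submission
  imports Defs
begin

text \<open>The WSU-UX update conserves the total weight for every \<open>K\<close>, and a valid step size keeps
  the weights nonnegative; hence the history law is a genuine distribution and summing out later
  draws yields the law of a prefix. After round \<open>T\<^sub>1\<close> arm 1 has loss 0 and arm 2 loss 1:
  drawing arm 1 leaves \<open>\<pi>\<^sub>2\<close> unchanged and drawing arm 2 decreases it, so \<open>\<pi>\<^sub>2\<close> is
  nonincreasing, and its conditional mean one round later is \<open>\<pi>\<^sub>2 - \<eta> \<pi>\<^sub>1 \<pi>\<^sub>2\<close>. On \<open>\<E>\<^sub>2\<close>
  the bound \<open>\<pi>\<^sub>1 \<ge> 1/4\<close> therefore persists, so \<open>E[\<pi>\<^sub>2; \<E>\<^sub>2]\<close> contracts by the factor
  \<open>1 - \<eta>/4\<close> per round, starting from at most \<open>3/4 Pr(\<E>\<^sub>2)\<close>; finally \<open>1 - x \<le> exp (-x)\<close>.\<close>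

lemma wsu_run_snoc:
  "wsu_run K \<eta> \<gamma> l t p (hs @ [i]) = wsu_update K \<eta> \<gamma> (l (t + length hs)) (wsu_run K \<eta> \<gamma> l t p hs) i"
  by (induction hs arbitrary: t p) auto

lemma wsu_pi_snoc:
  "wsu_pi K \<eta> \<gamma> l (hs @ [i]) = wsu_update K \<eta> \<gamma> (l (Suc (length hs))) (wsu_pi K \<eta> \<gamma> l hs) i"
  unfolding wsu_pi_def by (simp add: wsu_run_snoc)

lemma wsu_hist_prob_snoc:
  "wsu_hist_prob K \<eta> \<gamma> l (hs @ [i]) = wsu_hist_prob K \<eta> \<gamma> l hs * wsu_tilde K \<gamma> (wsu_pi K \<eta> \<gamma> l hs) i"
proof -
  have "(\<Prod>t<length hs. wsu_tilde K \<gamma> (wsu_pi K \<eta> \<gamma> l (take t (hs @ [i]))) ((hs @ [i]) ! t))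
      = (\<Prod>t<length hs. wsu_tilde K \<gamma> (wsu_pi K \<eta> \<gamma> l (take t hs)) (hs ! t))"
    by (rule prod.cong) (auto simp: nth_append)
  then show ?thesis unfolding wsu_hist_prob_def by (simp add: prod.lessThan_Suc)
qed

lemma histories_Suc: "histories K (Suc n) = (\<lambda>(hs, i). hs @ [i]) ` (histories K n \<times> {1..K})"
proof
  show "histories K (Suc n) \<subseteq> (\<lambda>(hs, i). hs @ [i]) ` (histories K n \<times> {1..K})"
  proof
    fix xs assume xs: "xs \<in> histories K (Suc n)"
    then have "xs \<noteq> []" by (auto simp: histories_def)
    then obtain ys y where "xs = ys @ [y]" by (metis rev_exhaust)
    with xs show "xs \<in> (\<lambda>(hs, i). hs @ [i]) ` (histories K n \<times> {1..K})"
      by (auto simp: histories_def image_iff)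
  qed
qed (auto simp: histories_def)

lemma sum_histories_Suc:
  "(\<Sum>hs\<in>histories K (Suc n). g hs) = (\<Sum>hs\<in>histories K n. \<Sum>i\<in>{1..K}. g (hs @ [i]))"
proof -
  have inj: "inj_on (\<lambda>(hs, i). hs @ [i]) (histories K n \<times> {1..K})"
    by (auto simp: inj_on_def)
  show ?thesis
    unfolding histories_Suc sum.reindex[OF inj] by (simp add: sum.cartesian_product case_prod_beta)
qed

lemma wsu_update_sum:
  assumes "(\<Sum>j\<in>{1..K}. p j) = 1"
  shows "(\<Sum>i\<in>{1..K}. wsu_update K \<eta> \<gamma> lt p I i) = 1"
proof -
  define S where "S = (\<Sum>j\<in>{1..K}. p j * wsu_est K \<gamma> lt p I j)"
  have "wsu_update K \<eta> \<gamma> lt p I i = p i - \<eta> * (p i * wsu_est K \<gamma> lt p I i) + \<eta> * S * p i" for i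
    unfolding wsu_update_def S_def by (simp add: algebra_simps)
  then have "(\<Sum>i\<in>{1..K}. wsu_update K \<eta> \<gamma> lt p I i)
      = (\<Sum>i\<in>{1..K}. p i) - \<eta> * S + \<eta> * S * (\<Sum>i\<in>{1..K}. p i)"
    by (simp add: sum.distrib sum_subtractf sum_distrib_left S_def)
  then show ?thesis using assms by simp
qed

lemma wsu_pi_sum:
  assumes "K \<ge> 1"
  shows "(\<Sum>i\<in>{1..K}. wsu_pi K \<eta> \<gamma> l hs i) = 1"
proof (induction hs rule: rev_induct)
  case Nil
  then show ?case using assms by (simp add: wsu_pi_def)
next
  case (snoc i hs)
  then show ?case unfolding wsu_pi_snoc by (rule wsu_update_sum)
qed

lemma wsu_tilde_sum:
  assumes "K \<ge> 1" and "(\<Sum>j\<in>{1..K}. p j) = 1"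
  shows "(\<Sum>i\<in>{1..K}. wsu_tilde K \<gamma> p i) = 1"
  using assms unfolding wsu_tilde_def by (simp add: sum.distrib sum_distrib_left[symmetric])

lemma wsu_tilde_pos:
  assumes "wsu_valid K \<eta> \<gamma>" and "K \<ge> 1" and "0 \<le> p i"
  shows "0 < wsu_tilde K \<gamma> p i"
  using assms unfolding wsu_valid_def wsu_tilde_def by (simp add: add_nonneg_pos)

lemma wsu_est_weighted_sum:
  assumes "I \<in> {1..K}"
  shows "(\<Sum>j\<in>{1..K}. p j * wsu_est K \<gamma> lt p I j) = p I * wsu_est K \<gamma> lt p I I"
proof -
  have "(\<Sum>j\<in>{1..K}. p j * wsu_est K \<gamma> lt p I j)
      = (\<Sum>j\<in>{1..K}. if j = I then p I * wsu_est K \<gamma> lt p I I else 0)"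
    by (rule sum.cong) (auto simp: wsu_est_def)
  then show ?thesis using assms by simp
qed

lemma wsu_update_nonneg:
  assumes valid: "wsu_valid K \<eta> \<gamma>"
    and p_nonneg: "\<forall>j\<in>{1..K}. 0 \<le> p j" and p_sum: "(\<Sum>j\<in>{1..K}. p j) = 1"
    and loss: "0 \<le> lt I" "lt I \<le> 1"
    and I: "I \<in> {1..K}" and i: "i \<in> {1..K}"
  shows "0 \<le> wsu_update K \<eta> \<gamma> lt p I i"
proof -
  define e where "e = wsu_est K \<gamma> lt p I I"
  have K: "real K \<ge> 1" using I by simp
  have \<eta>: "0 < \<eta>" and \<gamma>: "0 < \<gamma>" "\<gamma> < 1/2" and step: "\<eta> * real K / \<gamma> \<le> 1/2"
    using valid unfolding wsu_valid_def by auto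
  have pI: "0 \<le> p I" "p I \<le> 1"
    using p_nonneg I member_le_sum[of I "{1..K}" p] p_sum by auto
  have tilde: "\<gamma> / real K \<le> wsu_tilde K \<gamma> p I"
    using pI \<gamma> unfolding wsu_tilde_def by simp
  have tilde_pos: "0 < \<gamma> / real K" using \<gamma> K by simp
  have e_nonneg: "0 \<le> e"
    using loss tilde tilde_pos unfolding e_def wsu_est_def by simp
  have "e = lt I / wsu_tilde K \<gamma> p I" unfolding e_def wsu_est_def by simp
  then have "e \<le> 1 / (\<gamma> / real K)"
    using frac_le[OF _ loss(2) tilde_pos tilde] by simp
  then have "\<eta> * e \<le> \<eta> * (1 / (\<gamma> / real K))"
    using \<eta> by (intro mult_left_mono) simp_all
  also have "\<dots> \<le> 1/2" using step by simp
  finally have small: "\<eta> * e \<le> 1/2" .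
  have upd: "wsu_update K \<eta> \<gamma> lt p I i = p i * (1 - \<eta> * (wsu_est K \<gamma> lt p I i - p I * e))"
    unfolding wsu_update_def wsu_est_weighted_sum[OF I] e_def ..
  show ?thesis
  proof (cases "i = I")
    case True
    have "\<eta> * (e - p I * e) \<le> \<eta> * e"
      using \<eta> e_nonneg pI by (simp add: mult_left_mono)
    then show ?thesis using upd True small pI unfolding e_def by simp
  next
    case False
    have "0 \<le> \<eta> * (p I * e)" using \<eta> e_nonneg pI by simp
    then show ?thesis using upd False p_nonneg i by (simp add: wsu_est_def)
  qed
qed

lemma wsu_pi_nonneg:
  assumes valid: "wsu_valid K \<eta> \<gamma>" and loss: "\<forall>t j. 0 \<le> l t j \<and> l t j \<le> 1"
    and hs: "set hs \<subseteq> {1..K}" and i: "i \<in> {1..K}"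
  shows "0 \<le> wsu_pi K \<eta> \<gamma> l hs i"
  using hs i
proof (induction hs arbitrary: i rule: rev_induct)
  case Nil
  then show ?case by (simp add: wsu_pi_def)
next
  case (snoc I hs)
  then have "I \<in> {1..K}" by simp
  with snoc show ?case
    unfolding wsu_pi_snoc
    by (intro wsu_update_nonneg[OF valid] wsu_pi_sum ballI) (use loss in auto)
qed

lemma wsu_hist_prob_nonneg:
  assumes valid: "wsu_valid K \<eta> \<gamma>" and loss: "\<forall>t j. 0 \<le> l t j \<and> l t j \<le> 1"
    and hs: "hs \<in> histories K n"
  shows "0 \<le> wsu_hist_prob K \<eta> \<gamma> l hs"
  unfolding wsu_hist_prob_def
proof (rule prod_nonneg)
  fix t assume "t \<in> {..<length hs}"
  then have "hs ! t \<in> {1..K}" and "set (take t hs) \<subseteq> {1..K}"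
    using hs nth_mem set_take_subset unfolding histories_def by fastforce+
  then have "0 \<le> wsu_pi K \<eta> \<gamma> l (take t hs) (hs ! t)"
    by (rule wsu_pi_nonneg[OF valid loss, rotated])
  then show "0 \<le> wsu_tilde K \<gamma> (wsu_pi K \<eta> \<gamma> l (take t hs)) (hs ! t)"
    using valid unfolding wsu_tilde_def wsu_valid_def by simp
qed

lemma sum_histories_take:
  assumes "K \<ge> 1" and "n \<le> N"
  shows "(\<Sum>hs\<in>histories K N. wsu_hist_prob K \<eta> \<gamma> l hs * X (take n hs))
       = (\<Sum>hs\<in>histories K n. wsu_hist_prob K \<eta> \<gamma> l hs * X hs)"
proof -
  let ?H = "wsu_hist_prob K \<eta> \<gamma> l"
  have "(\<Sum>hs\<in>histories K (n + k). ?H hs * X (take n hs)) = (\<Sum>hs\<in>histories K n. ?H hs * X hs)" for k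
  proof (induction k)
    case 0
    show ?case by (rule sum.cong) (auto simp: histories_def)
  next
    case (Suc k)
    have "(\<Sum>i\<in>{1..K}. ?H (hs @ [i]) * X (take n (hs @ [i]))) = ?H hs * X (take n hs)"
      if "hs \<in> histories K (n + k)" for hs
    proof -
      have "take n (hs @ [i]) = take n hs" for i using that by (simp add: histories_def)
      then have "(\<Sum>i\<in>{1..K}. ?H (hs @ [i]) * X (take n (hs @ [i])))
          = ?H hs * X (take n hs) * (\<Sum>i\<in>{1..K}. wsu_tilde K \<gamma> (wsu_pi K \<eta> \<gamma> l hs) i)"
        by (simp add: wsu_hist_prob_snoc sum_distrib_left algebra_simps)
      then show ?thesis using wsu_tilde_sum[OF assms(1) wsu_pi_sum[OF assms(1)]] by simp
    qed
    then show ?case using Suc by (simp add: sum_histories_Suc)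
  qed
  from this[of "N - n"] show ?thesis using assms(2) by simp
qed

lemma wsu_prob_prefix:
  assumes "K \<ge> 1" and "n \<le> N"
  shows "wsu_prob K \<eta> \<gamma> l N (\<lambda>hs. A (take n hs)) = wsu_prob K \<eta> \<gamma> l n A"
proof -
  have "(if A hs then wsu_hist_prob K \<eta> \<gamma> l hs' else 0) = wsu_hist_prob K \<eta> \<gamma> l hs' * of_bool (A hs)"
    for hs hs' by simp
  then show ?thesis
    unfolding wsu_prob_def using sum_histories_take[OF assms, where X="\<lambda>hs. of_bool (A hs)"] by simp
qed

lemma wsu_pi_two_arms:
  assumes valid: "wsu_valid 2 \<eta> \<gamma>" and loss: "\<forall>t j. 0 \<le> l t j \<and> l t j \<le> 1"
    and hs: "set hs \<subseteq> {1..2}"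
  shows "0 \<le> wsu_pi 2 \<eta> \<gamma> l hs 1" "0 \<le> wsu_pi 2 \<eta> \<gamma> l hs 2"
    and "wsu_pi 2 \<eta> \<gamma> l hs 1 + wsu_pi 2 \<eta> \<gamma> l hs 2 = 1"
  using wsu_pi_nonneg[OF valid loss hs] wsu_pi_sum[of 2 \<eta> \<gamma> l hs]
  by (simp_all add: numeral_2_eq_2)

lemma wsu_update_zero_loss_arm:
  assumes "lt 1 = 0"
  shows "wsu_update 2 \<eta> \<gamma> lt p 1 2 = p 2"
  using assms by (simp add: wsu_update_def wsu_est_def numeral_2_eq_2)

lemma wsu_update_unit_loss_arm:
  assumes "lt 2 = 1" and "p 1 + p 2 = 1"
  shows "wsu_update 2 \<eta> \<gamma> lt p 2 2 = p 2 * (1 - \<eta> * p 1 / wsu_tilde 2 \<gamma> p 2)"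
proof -
  have "wsu_update 2 \<eta> \<gamma> lt p 2 2 = p 2 * (1 - \<eta> * ((1 - p 2) / wsu_tilde 2 \<gamma> p 2))"
    using assms(1) by (simp add: wsu_update_def wsu_est_def numeral_2_eq_2 diff_divide_distrib)
  then show ?thesis using assms(2) by simp
qed

lemma wsu_update_phase2_le:
  assumes valid: "wsu_valid 2 \<eta> \<gamma>"
    and p: "0 \<le> p 1" "0 \<le> p 2" "p 1 + p 2 = 1" and lt: "lt 1 = 0" "lt 2 = 1"
    and I: "I \<in> {1..2}"
  shows "wsu_update 2 \<eta> \<gamma> lt p I 2 \<le> p 2"
proof -
  have "0 \<le> \<eta> * p 1 / wsu_tilde 2 \<gamma> p 2"
    using valid p wsu_tilde_pos[OF valid, of p 2] unfolding wsu_valid_def by simp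
  then have "wsu_update 2 \<eta> \<gamma> lt p 2 2 \<le> p 2"
    unfolding wsu_update_unit_loss_arm[where lt=lt and p=p, OF lt(2) p(3)]
    using p(2) by (simp add: mult_left_le)
  moreover have "I = 1 \<or> I = 2" using I by auto
  ultimately show ?thesis using wsu_update_zero_loss_arm[where lt=lt, OF lt(1)] by auto
qed

lemma wsu_update_phase2_mean:
  assumes valid: "wsu_valid 2 \<eta> \<gamma>"
    and p: "0 \<le> p 2" "p 1 + p 2 = 1" and lt: "lt 1 = 0" "lt 2 = 1"
  shows "(\<Sum>i\<in>{1..2}. wsu_tilde 2 \<gamma> p i * wsu_update 2 \<eta> \<gamma> lt p i 2) = p 2 - \<eta> * p 1 * p 2"
proof -
  let ?t = "wsu_tilde 2 \<gamma> p"
  have t2: "0 < ?t 2" using wsu_tilde_pos[OF valid, of p 2] p by simp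
  have "?t 1 + ?t 2 = 1"
    using p(2) unfolding wsu_tilde_def by (simp add: algebra_simps flip: distrib_left)
  have "(\<Sum>i\<in>{1..2}. ?t i * wsu_update 2 \<eta> \<gamma> lt p i 2)
      = ?t 1 * p 2 + ?t 2 * (p 2 * (1 - \<eta> * p 1 / ?t 2))"
    using wsu_update_zero_loss_arm[where lt=lt, OF lt(1)]
      wsu_update_unit_loss_arm[where lt=lt and p=p, OF lt(2) p(2)]
    by (simp add: numeral_2_eq_2)
  also have "\<dots> = (?t 1 + ?t 2) * p 2 - \<eta> * p 1 * p 2"
    using t2 by (simp add: field_simps)
  finally show ?thesis using \<open>?t 1 + ?t 2 = 1\<close> by simp
qed

lemma wsu_pi_phase2_antimono:
  assumes valid: "wsu_valid 2 \<eta> \<gamma>" and loss: "\<forall>t j. 0 \<le> l t j \<and> l t j \<le> 1"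
    and phase2: "\<forall>t>n. l t 1 = 0 \<and> l t 2 = 1"
    and "n \<le> length hs" and "set (hs @ ys) \<subseteq> {1..2}"
  shows "wsu_pi 2 \<eta> \<gamma> l (hs @ ys) 2 \<le> wsu_pi 2 \<eta> \<gamma> l hs 2"
  using assms(5)
proof (induction ys rule: rev_induct)
  case Nil
  then show ?case by simp
next
  case (snoc I ys)
  let ?p = "wsu_pi 2 \<eta> \<gamma> l (hs @ ys)"
  have lt: "l (Suc (length (hs @ ys))) 1 = 0" "l (Suc (length (hs @ ys))) 2 = 1"
    using phase2 \<open>n \<le> length hs\<close> by auto
  have "set (hs @ ys) \<subseteq> {1..2}" and I: "I \<in> {1..2}" using snoc.prems by auto
  then have "wsu_update 2 \<eta> \<gamma> (l (Suc (length (hs @ ys)))) ?p I 2 \<le> ?p 2"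
    by (intro wsu_update_phase2_le[OF valid _ _ _ lt I] wsu_pi_two_arms[OF valid loss])
  then have "wsu_pi 2 \<eta> \<gamma> l (hs @ ys @ [I]) 2 \<le> ?p 2"
    using wsu_pi_snoc[of 2 \<eta> \<gamma> l "hs @ ys" I] by simp
  then show ?case using snoc by simp
qed

lemma wsu_pi_phase2_drift:
  assumes valid: "wsu_valid 2 \<eta> \<gamma>" and loss: "\<forall>t j. 0 \<le> l t j \<and> l t j \<le> 1"
    and phase2: "\<forall>t>n. l t 1 = 0 \<and> l t 2 = 1"
    and "n \<le> length hs" and hs: "set hs \<subseteq> {1..2}" and c: "c \<le> wsu_pi 2 \<eta> \<gamma> l hs 1"
  shows "(\<Sum>i\<in>{1..2}. wsu_tilde 2 \<gamma> (wsu_pi 2 \<eta> \<gamma> l hs) i * wsu_pi 2 \<eta> \<gamma> l (hs @ [i]) 2)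
       \<le> (1 - \<eta> * c) * wsu_pi 2 \<eta> \<gamma> l hs 2"
proof -
  let ?p = "wsu_pi 2 \<eta> \<gamma> l hs"
  note p = wsu_pi_two_arms[OF valid loss hs]
  have lt: "l (Suc (length hs)) 1 = 0" "l (Suc (length hs)) 2 = 1"
    using phase2 \<open>n \<le> length hs\<close> by auto
  have "\<eta> * c * ?p 2 \<le> \<eta> * ?p 1 * ?p 2"
    using valid c p(2) unfolding wsu_valid_def by (simp add: mult_right_mono)
  then show ?thesis
    unfolding wsu_pi_snoc wsu_update_phase2_mean[OF valid p(2,3) lt]
    by (simp add: algebra_simps)
qed

lemma wsu_pi_phase2_lower_bound:
  assumes valid: "wsu_valid 2 \<eta> \<gamma>" and loss: "\<forall>t j. 0 \<le> l t j \<and> l t j \<le> 1"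
    and phase2: "\<forall>t>n. l t 1 = 0 \<and> l t 2 = 1"
    and hs: "hs \<in> histories 2 m" and "n \<le> m" and c: "c \<le> wsu_pi 2 \<eta> \<gamma> l (take n hs) 1"
  shows "c \<le> wsu_pi 2 \<eta> \<gamma> l hs 1"
proof -
  have set_hs: "set hs \<subseteq> {1..2}" and "n \<le> length hs"
    using hs \<open>n \<le> m\<close> by (auto simp: histories_def)
  then have "wsu_pi 2 \<eta> \<gamma> l (take n hs @ drop n hs) 2 \<le> wsu_pi 2 \<eta> \<gamma> l (take n hs) 2"
    by (intro wsu_pi_phase2_antimono[OF valid loss phase2]) simp_all
  moreover have "set (take n hs) \<subseteq> {1..2}"
    using set_hs set_take_subset[of n hs] by (rule order_trans[rotated])
  ultimately show ?thesis
    using c wsu_pi_two_arms(3)[OF valid loss set_hs] wsu_pi_two_arms(3)[OF valid loss, where hs="take n hs"]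
    by simp
qed

lemma wsu_phase2_event_step:
  assumes valid: "wsu_valid 2 \<eta> \<gamma>" and loss: "\<forall>t j. 0 \<le> l t j \<and> l t j \<le> 1"
    and phase2: "\<forall>t>n. l t 1 = 0 \<and> l t 2 = 1"
    and A: "\<And>hs. hs \<in> histories 2 n \<Longrightarrow> A hs \<Longrightarrow> c \<le> wsu_pi 2 \<eta> \<gamma> l hs 1"
    and hs: "hs \<in> histories 2 m" and "n \<le> m"
  defines "Z \<equiv> \<lambda>hs. of_bool (A (take n hs)) * wsu_pi 2 \<eta> \<gamma> l hs 2"
  shows "(\<Sum>i\<in>{1..2}. wsu_hist_prob 2 \<eta> \<gamma> l (hs @ [i]) * Z (hs @ [i]))
       \<le> (1 - \<eta> * c) * (wsu_hist_prob 2 \<eta> \<gamma> l hs * Z hs)"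
proof -
  let ?H = "wsu_hist_prob 2 \<eta> \<gamma> l" and ?P = "wsu_pi 2 \<eta> \<gamma> l"
  have len: "n \<le> length hs" and set_hs: "set hs \<subseteq> {1..2}"
    using hs \<open>n \<le> m\<close> by (auto simp: histories_def)
  have take_snoc: "take n (hs @ [i]) = take n hs" for i using len by simp
  show ?thesis
  proof (cases "A (take n hs)")
    case True
    have "take n hs \<in> histories 2 n" using hs len set_take_subset[of n hs] by (auto simp: histories_def)
    then have "c \<le> ?P hs 1"
      using A True by (intro wsu_pi_phase2_lower_bound[OF valid loss phase2 hs \<open>n \<le> m\<close>])
    then have drift: "(\<Sum>i\<in>{1..2}. wsu_tilde 2 \<gamma> (?P hs) i * ?P (hs @ [i]) 2) \<le> (1 - \<eta> * c) * ?P hs 2"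
      by (rule wsu_pi_phase2_drift[OF valid loss phase2 len set_hs])
    have "(\<Sum>i\<in>{1..2}. ?H (hs @ [i]) * Z (hs @ [i]))
        = ?H hs * (\<Sum>i\<in>{1..2}. wsu_tilde 2 \<gamma> (?P hs) i * ?P (hs @ [i]) 2)"
      unfolding Z_def take_snoc using True by (simp add: wsu_hist_prob_snoc sum_distrib_left mult_ac)
    also have "\<dots> \<le> ?H hs * ((1 - \<eta> * c) * ?P hs 2)"
      using drift wsu_hist_prob_nonneg[OF valid loss hs] by (rule mult_left_mono)
    finally show ?thesis using True by (simp add: Z_def mult_ac)
  next
    case False
    then show ?thesis unfolding Z_def take_snoc by simp
  qed
qed

lemma wsu_phase2_contraction:
  assumes valid: "wsu_valid 2 \<eta> \<gamma>" and loss: "\<forall>t j. 0 \<le> l t j \<and> l t j \<le> 1"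
    and phase2: "\<forall>t>n. l t 1 = 0 \<and> l t 2 = 1"
    and "c \<le> 1" and A: "\<And>hs. hs \<in> histories 2 n \<Longrightarrow> A hs \<Longrightarrow> c \<le> wsu_pi 2 \<eta> \<gamma> l hs 1"
  shows "(\<Sum>hs\<in>histories 2 (n + j).
            wsu_hist_prob 2 \<eta> \<gamma> l hs * (of_bool (A (take n hs)) * wsu_pi 2 \<eta> \<gamma> l hs 2))
         \<le> (1 - c) * (1 - \<eta> * c) ^ j * wsu_prob 2 \<eta> \<gamma> l n A"
proof (induction j)
  case 0
  have "wsu_hist_prob 2 \<eta> \<gamma> l hs * (of_bool (A (take n hs)) * wsu_pi 2 \<eta> \<gamma> l hs 2)
      \<le> (1 - c) * (if A hs then wsu_hist_prob 2 \<eta> \<gamma> l hs else 0)" if hs: "hs \<in> histories 2 n" for hs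
  proof -
    have "take n hs = hs" and "set hs \<subseteq> {1..2}" using hs by (simp_all add: histories_def)
    moreover note wsu_pi_two_arms(3)[OF valid loss \<open>set hs \<subseteq> {1..2}\<close>]
    ultimately have "A hs \<Longrightarrow> wsu_pi 2 \<eta> \<gamma> l hs 2 \<le> 1 - c" and "take n hs = hs"
      using A[OF hs] by auto
    then show ?thesis
      using wsu_hist_prob_nonneg[OF valid loss hs] by (simp add: mult_left_mono mult.commute[of "1 - c"])
  qed
  then show ?case
    unfolding wsu_prob_def sum_distrib_left by (simp add: sum_mono)
next
  case (Suc j)
  have "\<eta> * c \<le> \<eta>" and "\<eta> < 1"
    using valid \<open>c \<le> 1\<close> mult_left_le[of c \<eta>] unfolding wsu_valid_def by auto
  then have "0 \<le> 1 - \<eta> * c" by linarith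
  let ?HZ = "\<lambda>hs. wsu_hist_prob 2 \<eta> \<gamma> l hs * (of_bool (A (take n hs)) * wsu_pi 2 \<eta> \<gamma> l hs 2)"
  have "(\<Sum>hs\<in>histories 2 (n + Suc j). ?HZ hs) \<le> (\<Sum>hs\<in>histories 2 (n + j). (1 - \<eta> * c) * ?HZ hs)"
    unfolding add_Suc_right sum_histories_Suc
  proof (rule sum_mono)
    fix hs assume "hs \<in> histories 2 (n + j)"
    from wsu_phase2_event_step[OF valid loss phase2 A this]
    show "(\<Sum>i\<in>{1..2}. ?HZ (hs @ [i])) \<le> (1 - \<eta> * c) * ?HZ hs" by simp
  qed
  also have "\<dots> \<le> (1 - \<eta> * c) * ((1 - c) * (1 - \<eta> * c) ^ j * wsu_prob 2 \<eta> \<gamma> l n A)"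
    unfolding sum_distrib_left[symmetric] using Suc \<open>0 \<le> 1 - \<eta> * c\<close> by (rule mult_left_mono)
  finally show ?case by (simp add: mult_ac)
qed

theorem mainTheorem18:
  fixes T \<tau> :: nat and \<eta> \<gamma> :: real
  defines "T1 \<equiv> T div 100" and "T2 \<equiv> 2 * T div 10" and "T3 \<equiv> T div 10" and "T4 \<equiv> 69 * T div 100"
  defines "l \<equiv> two_phase_loss T"
  defines "E2 \<equiv> (\<lambda>hs. wsu_pi 2 \<eta> \<gamma> l (take (T1 + T2) hs) 1 \<ge> 1/4)"
  assumes "T \<ge> 1" and "100 dvd T"
    and "wsu_valid 2 \<eta> \<gamma>"
    and "wsu_prob 2 \<eta> \<gamma> l T E2 > 0"
    and "1 \<le> \<tau>" and "\<tau> \<le> T3 + T4"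
  shows "wsu_cond_exp 2 \<eta> \<gamma> l T (\<lambda>hs. wsu_pi 2 \<eta> \<gamma> l (take (T1 + T2 + 1 + \<tau> - 1) hs) 2) E2
           \<le> 3/4 * exp (- (\<eta> / 4) * real \<tau>)"
proof -
  obtain c where T: "T = 100 * c" using \<open>100 dvd T\<close> ..
  define n0 where "n0 = T1 + T2"
  define A where "A hs \<longleftrightarrow> 1/4 \<le> wsu_pi 2 \<eta> \<gamma> l hs 1" for hs
  have n0: "n0 = 21 * c" "n0 + \<tau> \<le> T" using \<open>\<tau> \<le> T3 + T4\<close> unfolding n0_def T1_def T2_def T3_def T4_def T by simp_all
  have loss: "\<forall>t j. 0 \<le> l t j \<and> l t j \<le> 1" and phase2: "\<forall>t>n0. l t 1 = 0 \<and> l t 2 = 1"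
    unfolding l_def two_phase_loss_def using n0(1) T by auto
  let ?H = "wsu_hist_prob 2 \<eta> \<gamma> l"
  let ?Z = "\<lambda>hs. of_bool (A (take n0 hs)) * wsu_pi 2 \<eta> \<gamma> l hs 2"
  have "(\<Sum>hs\<in>histories 2 T. if E2 hs then ?H hs * wsu_pi 2 \<eta> \<gamma> l (take (T1 + T2 + 1 + \<tau> - 1) hs) 2 else 0)
      = (\<Sum>hs\<in>histories 2 T. ?H hs * ?Z (take (n0 + \<tau>) hs))"
    unfolding E2_def A_def n0_def by (rule sum.cong) (simp_all add: min_def)
  also have "\<dots> = (\<Sum>hs\<in>histories 2 (n0 + \<tau>). ?H hs * ?Z hs)"
    using n0(2) by (intro sum_histories_take[where X = ?Z]) simp_all
  also have "\<dots> \<le> 3/4 * (1 - \<eta> / 4) ^ \<tau> * wsu_prob 2 \<eta> \<gamma> l n0 A"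
    using wsu_phase2_contraction[OF \<open>wsu_valid 2 \<eta> \<gamma>\<close> loss phase2, of "1/4" A \<tau>] unfolding A_def by simp
  finally have "wsu_cond_exp 2 \<eta> \<gamma> l T (\<lambda>hs. wsu_pi 2 \<eta> \<gamma> l (take (T1 + T2 + 1 + \<tau> - 1) hs) 2) E2
      \<le> 3/4 * (1 - \<eta> / 4) ^ \<tau>"
    using \<open>wsu_prob 2 \<eta> \<gamma> l T E2 > 0\<close> wsu_prob_prefix[of 2 n0 T \<eta> \<gamma> l A] n0(2)
    unfolding wsu_cond_exp_def E2_def A_def n0_def by (simp add: divide_le_eq)
  also have "\<dots> \<le> 3/4 * exp (- (\<eta> / 4) * real \<tau>)"
    using exp_ge_one_minus_x_over_n_power_n[of "\<eta> / 4 * real \<tau>" \<tau>] \<open>wsu_valid 2 \<eta> \<gamma>\<close> \<open>1 \<le> \<tau>\<close>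
    unfolding wsu_valid_def by simp
  finally show ?thesis .
qed

end
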